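(* Assume $-1\in\mathbb F^2$ and let $J=JCK(Z,\delta)$, with $Z$-basis $\{1,v_1,v_2,v_3\}$ of $J_{\bar0}$ and $\{y,y_1,y_2,y_3\}$ of $J_{\bar1}$ as in the context. Then there is an injective group homomorphism from the symmetric group $S_4$ into the automorphism group of $J$ (with image consisting of even $Z$-linear automorphisms) such that: $\tau_1=(1\,2)(3\,4)$ acts as the identity on $J^{[\bar0,\bar0]}\oplus J^{[\bar1,\bar1]}$ and as $-1$ on $J^{[\bar1,\bar0]}\oplus J^{[\bar0,\bar1]}$; $\tau_2=(2\,3)(4\,1)$ acts as the identity on $J^{[\bar0,\bar0]}\oplus J^{[\bar1,\bar0]}$ and as $-1$ on $J^{[\bar0,\bar1]}\oplus J^{[\bar1,\bar1]}$; $\varphi=(1\,2\,3)$ acts as the $Z$-linear map with $\varphi(1)=1$, $\varphi(y)=y$, $\varphi(v_i)=v_{i+1}$, $\varphi(y_i)=y_{i+1}$ (indices mod 3); $\tau=(1\,2)$ acts as the $Z$-linear map with $\tau(1)=1$, $\tau(y)=y$, $\tau(v_1)=-v_2$, $\tau(v_2)=-v_1$, $\tau(v_3)=-v_3$, $\tau(y_1)=-y_2$, $\tau(y_2)=-y_1$, $\tau(y_3)=-y_3$.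
   Context: Let $\mathbb F$ be a field of characteristic $\neq 2$, $Z$ a unital commutative associative $\mathbb F$-algebra, and $\delta$ a derivation of $Z$ such that $Z\delta(Z)=Z$ (the $\mathbb F$-span of all products $f\delta(g)$, $f,g\in Z$, is $Z$). The Cheng-Kac Jordan superalgebra $J=JCK(Z,\delta)=J_{\bar0}\oplus J_{\bar1}$ is defined as follows: $J_{\bar0}=Z1\oplus Zw_1\oplus Zw_2\oplus Zw_3$ and $J_{\bar1}=Zx\oplus Zx_1\oplus Zx_2\oplus Zx_3$ are free $Z$-modules of rank 4; $J_{\bar0}$ is the $Z$-algebra $(\mathbb F1\oplus\mathbb Fw_1\oplus\mathbb Fw_2\oplus\mathbb Fw_3)\otimes_{\mathbb F}Z$ with $1$ the identity, $w_1^2=w_2^2=1$, $w_3^2=-1$, $w_iw_j=0$ for $i\ne j$. For $f,g\in Z$ and $i,j\in\{1,2,3\}$ the remaining products are: $f(gx)=(fg)x$, $f(gx_j)=(fg)x_j$, $(fw_i)(gx)=(\delta(f)g)x_i$, $(fw_i)(gx_j)=-(fg)x_{i\times j}$, $(fx)(gx)=\delta(f)g-f\delta(g)$, $(fx)(gx_j)=-(fg)w_j$, $(fx_i)(gx)=(fg)w_i$, $(fx_i)(gx_j)=0$, extended by supercommutativity ($ab=(-1)^{|a||b|}ba$), where $x_{1\times2}=-x_{2\times1}=x_3$, $x_{1\times3}=-x_{3\times1}=x_2$, $x_{3\times2}=-x_{2\times3}=x_1$, $x_{i\times i}=0$. $J$ is $\mathbb Z_2^2$-graded by $J^{[\bar0,\bar0]}=Z\oplus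 Zx$, $J^{[\bar1,\bar0]}=Zw_1\oplus Zx_1$, $J^{[\bar0,\bar1]}=Zw_2\oplus Zx_2$, $J^{[\bar1,\bar1]}=Zw_3\oplus Zx_3$. When $-1\in\mathbb F^2$, fix $\sqrt{-1}\in\mathbb F$ and set $v_1=\sqrt{-1}w_1$, $v_2=\sqrt{-1}w_2$, $v_3=w_3$, $y=x$, $y_1=\sqrt{-1}x_1$, $y_2=\sqrt{-1}x_2$, $y_3=x_3$. *)

theory Defs
  imports "HOL-Algebra.Sym_Groups"
begin

text \<open>Indices 1,2,3 and the eight Z-basis elements 1, w1, w2, w3 (even), x, x1, x2, x3 (odd).\<close>

datatype idx3 = I1 | I2 | I3

datatype jb = U | W idx3 | Xo | X idx3

lemma idx3_cases: "y = I1 \<or> y = I2 \<or> y = I3"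
  by (cases y) auto

lemma UNIV_jb: "(UNIV :: jb set) = {U, W I1, W I2, W I3, Xo, X I1, X I2, X I3}"
proof -
  have "x \<in> {U, W I1, W I2, W I3, Xo, X I1, X I2, X I3}" for x
    by (cases x) (use idx3_cases in auto)
  then show ?thesis by blast
qed

instance jb :: finite
  by standard (simp add: UNIV_jb)

text \<open>An element of J is its coordinate vector w.r.t. the Z-basis (J is a free Z-module of rank 8).\<close>
type_synonym 'z jck = "jb \<Rightarrow> 'z"

definition sc :: "jb \<Rightarrow> 'z::comm_ring_1 \<Rightarrow> 'z jck" where
  "sc b f = (\<lambda>c. if c = b then f else 0)"

definition jzero :: "'z::comm_ring_1 jck" where "jzero = (\<lambda>c. 0)"
definition jadd :: "'z::comm_ring_1 jck \<Rightarrow> 'z jck \<Rightarrow> 'z jck" where "jadd a b = (\<lambda>c. a c + b c)"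
definition jneg :: "'z::comm_ring_1 jck \<Rightarrow> 'z jck" where "jneg a = (\<lambda>c. - a c)"
definition jscal :: "'z::comm_ring_1 \<Rightarrow> 'z jck \<Rightarrow> 'z jck" where "jscal z a = (\<lambda>c. z * a c)"

fun wsq :: "idx3 \<Rightarrow> 'z::comm_ring_1" where
  "wsq I1 = 1" | "wsq I2 = 1" | "wsq I3 = -1"

text \<open>cr i j h = h x_{i x j}, with x_{1x2}=-x_{2x1}=x3, x_{1x3}=-x_{3x1}=x2, x_{3x2}=-x_{2x3}=x1, x_{ixi}=0.\<close>
fun cr :: "idx3 \<Rightarrow> idx3 \<Rightarrow> 'z::comm_ring_1 \<Rightarrow> 'z jck" where
  "cr I1 I2 h = sc (X I3) h"
| "cr I2 I1 h = sc (X I3) (- h)"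
| "cr I1 I3 h = sc (X I2) h"
| "cr I3 I1 h = sc (X I2) (- h)"
| "cr I3 I2 h = sc (X I1) h"
| "cr I2 I3 h = sc (X I1) (- h)"
| "cr I1 I1 h = jzero"
| "cr I2 I2 h = jzero"
| "cr I3 I3 h = jzero"

text \<open>bprod d p f q g = (f p)(g q), the product of f*p and g*q for basis elements p, q,
  following the multiplication table (the odd-even cases by supercommutativity).\<close>
fun bprod :: "('z::comm_ring_1 \<Rightarrow> 'z) \<Rightarrow> jb \<Rightarrow> 'z \<Rightarrow> jb \<Rightarrow> 'z \<Rightarrow> 'z jck" where
  "bprod d U f U g = sc U (f * g)"
| "bprod d U f (W j) g = sc (W j) (f * g)"
| "bprod d (W i) f U g = sc (W i) (f * g)"
| "bprod d (W i) f (W j) g = (if i = j then sc U (wsq i * (f * g)) else jzero)"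
| "bprod d U f Xo g = sc Xo (f * g)"
| "bprod d U f (X j) g = sc (X j) (f * g)"
| "bprod d (W i) f Xo g = sc (X i) (d f * g)"
| "bprod d (W i) f (X j) g = jneg (cr i j (f * g))"
| "bprod d Xo f U g = sc Xo (g * f)"
| "bprod d (X j) f U g = sc (X j) (g * f)"
| "bprod d Xo f (W i) g = sc (X i) (d g * f)"
| "bprod d (X j) f (W i) g = jneg (cr i j (g * f))"
| "bprod d Xo f Xo g = sc U (d f * g - f * d g)"
| "bprod d Xo f (X j) g = sc (W j) (- (f * g))"
| "bprod d (X i) f Xo g = sc (W i) (f * g)"
| "bprod d (X i) f (X j) g = jzero"

definition jmult :: "('z::comm_ring_1 \<Rightarrow> 'z) \<Rightarrow> 'z jck \<Rightarrow> 'z jck \<Rightarrow> 'z jck" where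
  "jmult d a b = (\<lambda>c. \<Sum>p\<in>UNIV. \<Sum>q\<in>UNIV. bprod d p (a p) q (b q) c)"

definition jspan :: "jb set \<Rightarrow> ('z::comm_ring_1) jck set" where
  "jspan S = {a. \<forall>c. c \<notin> S \<longrightarrow> a c = 0}"

definition J_even :: "('z::comm_ring_1) jck set" where "J_even = jspan {U, W I1, W I2, W I3}"
definition J_odd :: "('z::comm_ring_1) jck set" where "J_odd = jspan {Xo, X I1, X I2, X I3}"

definition J00 :: "('z::comm_ring_1) jck set" where "J00 = jspan {U, Xo}"
definition J10 :: "('z::comm_ring_1) jck set" where "J10 = jspan {W I1, X I1}"
definition J01 :: "('z::comm_ring_1) jck set" where "J01 = jspan {W I2, X I2}"
definition J11 :: "('z::comm_ring_1) jck set" where "J11 = jspan {W I3, X I3}"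

definition dsum :: "('z::comm_ring_1) jck set \<Rightarrow> 'z jck set \<Rightarrow> 'z jck set" where
  "dsum A B = {jadd a b | a b. a \<in> A \<and> b \<in> B}"

text \<open>F-algebra automorphisms of J (F embedded in Z via iota).\<close>
definition is_aut :: "('f::field \<Rightarrow> 'z::comm_ring_1) \<Rightarrow> ('z \<Rightarrow> 'z) \<Rightarrow> ('z jck \<Rightarrow> 'z jck) \<Rightarrow> bool" where
  "is_aut \<iota> d s \<longleftrightarrow> bij s
     \<and> (\<forall>a b. s (jadd a b) = jadd (s a) (s b))
     \<and> (\<forall>c a. s (jscal (\<iota> c) a) = jscal (\<iota> c) (s a))
     \<and> (\<forall>a b. s (jmult d a b) = jmult d (s a) (s b))"

definition aut_group :: "('f::field \<Rightarrow> 'z::comm_ring_1) \<Rightarrow> ('z \<Rightarrow> 'z) \<Rightarrow> ('z jck \<Rightarrow> 'z jck) monoid" where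
  "aut_group \<iota> d = \<lparr> carrier = {s. is_aut \<iota> d s}, mult = (\<circ>), one = id \<rparr>"

definition even_map :: "('z::comm_ring_1 jck \<Rightarrow> 'z jck) \<Rightarrow> bool" where
  "even_map s \<longleftrightarrow> s ` J_even \<subseteq> J_even \<and> s ` J_odd \<subseteq> J_odd"

definition Z_linear :: "('z::comm_ring_1 jck \<Rightarrow> 'z jck) \<Rightarrow> bool" where
  "Z_linear s \<longleftrightarrow> (\<forall>z a. s (jscal z a) = jscal z (s a)) \<and> (\<forall>a b. s (jadd a b) = jadd (s a) (s b))"

text \<open>The basis 1, v1, v2, v3, y, y1, y2, y3 for a fixed square root i of -1 in F.\<close>
definition jone :: "'z::comm_ring_1 jck" where "jone = sc U 1"
definition vv :: "('f::field \<Rightarrow> 'z::comm_ring_1) \<Rightarrow> 'f \<Rightarrow> idx3 \<Rightarrow> 'z jck" where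
  "vv \<iota> i k = (case k of I1 \<Rightarrow> sc (W I1) (\<iota> i) | I2 \<Rightarrow> sc (W I2) (\<iota> i) | I3 \<Rightarrow> sc (W I3) 1)"
definition yy0 :: "'z::comm_ring_1 jck" where "yy0 = sc Xo 1"
definition yy :: "('f::field \<Rightarrow> 'z::comm_ring_1) \<Rightarrow> 'f \<Rightarrow> idx3 \<Rightarrow> 'z jck" where
  "yy \<iota> i k = (case k of I1 \<Rightarrow> sc (X I1) (\<iota> i) | I2 \<Rightarrow> sc (X I2) (\<iota> i) | I3 \<Rightarrow> sc (X I3) 1)"

fun nxt :: "idx3 \<Rightarrow> idx3" where "nxt I1 = I2" | "nxt I2 = I3" | "nxt I3 = I1"

definition perm_tau1 :: "nat \<Rightarrow> nat" where
  "perm_tau1 n = (if n = 1 then 2 else if n = 2 then 1 else if n = 3 then 4 else if n = 4 then 3 else n)"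
definition perm_tau2 :: "nat \<Rightarrow> nat" where
  "perm_tau2 n = (if n = 2 then 3 else if n = 3 then 2 else if n = 4 then 1 else if n = 1 then 4 else n)"
definition perm_phi :: "nat \<Rightarrow> nat" where
  "perm_phi n = (if n = 1 then 2 else if n = 2 then 3 else if n = 3 then 1 else n)"
definition perm_tau :: "nat \<Rightarrow> nat" where
  "perm_tau n = (if n = 1 then 2 else if n = 2 then 1 else n)"

end

theory Submission
  imports Defs
begin

(* S_4 acts on F^3 through its reflection representation: it permutes the
   four vertices e_1 = (1,-1,-1), e_2 = (-1,1,-1), e_3 = (-1,-1,1), e_4 = (1,1,1) of a
   regular tetrahedron, and e_a . e_c = 4 [a = c] - 1.  Twisting by the sign character gives
   the matrices tet_rep p (sign p times the vertex permutation matrix); the vertices are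
   pairwise distinct even up to sign, so this representation is faithful.  Rewriting it in
   the coordinates w_j (v_1 = i w_1, v_2 = i w_2, v_3 = w_3) is conjugation by a diagonal
   matrix, giving vmat i p.  Every 3x3 matrix A over Z acts Z-linearly on J by fixing 1 and x
   and acting by A simultaneously on (w_1,w_2,w_3) and on (x_1,x_2,x_3) (jmat A); this is
   compatible with matrix products.  For the six transpositions the resulting maps are
   checked against the multiplication table of J, so they are automorphisms; since the
   transpositions generate S_4, rho p = jmat (vmat i p) is an automorphism for every p.
   Faithfulness of rho reduces to faithfulness of tet_rep, and the actions of tau_1, tau_2,
   phi and tau are read off from their decompositions into transpositions. *)

lemma one_to_four_cases: "(a::nat) \<in> {1..4} \<Longrightarrow> a = 1 \<or> a = 2 \<or> a = 3 \<or> a = 4"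
  by auto

lemma sum_one_to_four: "sum f {1..4::nat} = f 1 + f 2 + f 3 + f 4"
proof -
  have "{1..4::nat} = {1,2,3,4}" by auto
  then show ?thesis by (simp add: add.assoc)
qed

lemma all_idx3: "(\<forall>j. P j) \<longleftrightarrow> P I1 \<and> P I2 \<and> P I3"
  by (metis idx3.exhaust)

definition tet :: "nat \<Rightarrow> idx3 \<Rightarrow> 'a::comm_ring_1" where
  "tet a j = (if a = 1 then (if j = I1 then 1 else -1)
            else if a = 2 then (if j = I2 then 1 else -1)
            else if a = 3 then (if j = I3 then 1 else -1) else 1)"

lemma tet_inner:
  "a \<in> {1..4} \<Longrightarrow> c \<in> {1..4} \<Longrightarrow>
   tet a I1 * tet c I1 + tet a I2 * tet c I2 + tet a I3 * tet c I3
     = (if a = c then 4 else 0) - (1::'a::comm_ring_1)"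
  by (drule one_to_four_cases, drule one_to_four_cases) (auto simp: tet_def)

lemma tet_sum: "(\<Sum>a\<in>{1..4}. tet a j) = (0::'a::comm_ring_1)"
  unfolding sum_one_to_four by (cases j) (simp_all add: tet_def)

definition mat_mult :: "(idx3 \<Rightarrow> idx3 \<Rightarrow> 'a::comm_ring_1) \<Rightarrow> (idx3 \<Rightarrow> idx3 \<Rightarrow> 'a) \<Rightarrow> idx3 \<Rightarrow> idx3 \<Rightarrow> 'a" where
  "mat_mult A B j k = A j I1 * B I1 k + A j I2 * B I2 k + A j I3 * B I3 k"

(* Four times the matrix moving each vertex e_a to e_(p a). *)
definition tet_frame :: "(nat \<Rightarrow> nat) \<Rightarrow> idx3 \<Rightarrow> idx3 \<Rightarrow> 'a::comm_ring_1" where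
  "tet_frame p j k = (\<Sum>a\<in>{1..4}. tet (p a) j * tet a k)"

lemma tet_frame_apply:
  assumes p: "p permutes {1..4}" and b: "b \<in> {1..4}"
  shows "tet_frame p j I1 * tet b I1 + tet_frame p j I2 * tet b I2 + tet_frame p j I3 * tet b I3
       = 4 * (tet (p b) j :: 'a::comm_ring_1)"
proof -
  have "tet_frame p j I1 * tet b I1 + tet_frame p j I2 * tet b I2 + tet_frame p j I3 * tet b I3
      = (\<Sum>a\<in>{1..4}. tet (p a) j * (tet a I1 * tet b I1 + tet a I2 * tet b I2 + tet a I3 * tet b I3) :: 'a)"
    unfolding tet_frame_def sum_distrib_right sum.distrib[symmetric]
    by (intro sum.cong refl) (simp add: algebra_simps)
  also have "\<dots> = (\<Sum>a\<in>{1..4}. (if a = b then 4 * tet (p b) j else 0) - tet (p a) j)"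
  proof (intro sum.cong refl)
    fix a assume a: "a \<in> {1..4::nat}"
    show "tet (p a) j * (tet a I1 * tet b I1 + tet a I2 * tet b I2 + tet a I3 * tet b I3)
        = (if a = b then 4 * tet (p b) j else 0) - (tet (p a) j :: 'a)"
      by (subst tet_inner[OF a b]) (simp add: algebra_simps)
  qed
  also have "\<dots> = 4 * tet (p b) j - (\<Sum>a\<in>{1..4}. tet (p a) j)"
    using b by (simp add: sum_subtractf)
  also have "(\<Sum>a\<in>{1..4}. tet (p a) j) = (\<Sum>a\<in>{1..4}. tet a j :: 'a)"
    using sum.permute[OF p, of "\<lambda>a. tet a j", symmetric] by (simp add: comp_def)
  finally show ?thesis unfolding tet_sum by simp
qed

lemma tet_frame_mult:
  assumes p: "p permutes {1..4}" and q: "q permutes {1..4}"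
  shows "mat_mult (tet_frame p) (tet_frame q) j k = 4 * (tet_frame (p \<circ> q) j k :: 'a::comm_ring_1)"
proof -
  have "mat_mult (tet_frame p) (tet_frame q) j k
      = (\<Sum>b\<in>{1..4}. (tet_frame p j I1 * tet (q b) I1 + tet_frame p j I2 * tet (q b) I2
                       + tet_frame p j I3 * tet (q b) I3) * (tet b k :: 'a))"
    by (simp add: mat_mult_def tet_frame_def[of q] sum_distrib_left sum_distrib_right
        sum.distrib[symmetric] algebra_simps)
  also have "\<dots> = (\<Sum>b\<in>{1..4}. 4 * tet (p (q b)) j * tet b k)"
  proof (intro sum.cong refl)
    fix b :: nat assume "b \<in> {1..4}"
    then have "q b \<in> {1..4}" using q by (metis permutes_in_image)
    then show "(tet_frame p j I1 * tet (q b) I1 + tet_frame p j I2 * tet (q b) I2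
                + tet_frame p j I3 * tet (q b) I3) * tet b k = 4 * tet (p (q b)) j * (tet b k :: 'a)"
      by (simp add: tet_frame_apply[OF p])
  qed
  also have "\<dots> = 4 * tet_frame (p \<circ> q) j k"
    by (simp add: tet_frame_def sum_distrib_left mult.assoc)
  finally show ?thesis .
qed

lemma tet_frame_id: "tet_frame id j k = (if j = k then 4 else (0::'a::comm_ring_1))"
  unfolding tet_frame_def sum_one_to_four by (cases j; cases k) (simp_all add: tet_def)

lemma four_nonzero: "(2::'f::field) \<noteq> 0 \<Longrightarrow> (4::'f) \<noteq> 0"
  by (metis mult_eq_0_iff numeral_Bit0_eq_double one_add_one)

definition tet_rep :: "(nat \<Rightarrow> nat) \<Rightarrow> idx3 \<Rightarrow> idx3 \<Rightarrow> 'f::field" where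
  "tet_rep p j k = of_int (sign p) * tet_frame p j k / 4"

lemma tet_rep_mult:
  assumes two: "(2::'f::field) \<noteq> 0" and p: "p permutes {1..4}" and q: "q permutes {1..4}"
  shows "mat_mult (tet_rep p) (tet_rep q) j k = (tet_rep (p \<circ> q) j k :: 'f)"
proof -
  have four: "(4::'f) \<noteq> 0" using four_nonzero[OF two] .
  have sixteen: "(16::'f) \<noteq> 0"
    using four mult_eq_0_iff[of "4::'f" 4] by simp
  have sign: "sign (p \<circ> q) = sign p * sign q"
    using sign_compose p q permutes_imp_permutation[of "{1..4::nat}"] by blast
  have "mat_mult (tet_rep p) (tet_rep q) j k
      = of_int (sign p) * of_int (sign q) * mat_mult (tet_frame p) (tet_frame q) j k / (4 * 4 :: 'f)"
    unfolding mat_mult_def tet_rep_def by (simp add: field_simps)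
  also have "\<dots> = tet_rep (p \<circ> q) j k"
    unfolding tet_frame_mult[OF p q] tet_rep_def sign using four sixteen by (simp add: field_simps)
  finally show ?thesis .
qed

lemma tet_rep_id: "(2::'f::field) \<noteq> 0 \<Longrightarrow> tet_rep id j k = (if j = k then 1 else (0::'f))"
  by (simp add: tet_rep_def tet_frame_id four_nonzero)

lemma tet_rep_apply:
  assumes two: "(2::'f::field) \<noteq> 0" and p: "p permutes {1..4}" and b: "b \<in> {1..4}"
  shows "tet_rep p j I1 * tet b I1 + tet_rep p j I2 * tet b I2 + tet_rep p j I3 * tet b I3
       = (of_int (sign p) :: 'f) * tet (p b) j"
proof -
  have "tet_rep p j I1 * tet b I1 + tet_rep p j I2 * tet b I2 + tet_rep p j I3 * tet b I3
      = of_int (sign p) * (tet_frame p j I1 * tet b I1 + tet_frame p j I2 * tet b I2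
                           + tet_frame p j I3 * tet b I3) / (4::'f)"
    unfolding tet_rep_def by (simp add: field_simps)
  then show ?thesis unfolding tet_frame_apply[OF p b] using four_nonzero[OF two] by simp
qed

(* The vertices are distinct even up to sign (this needs 1 <> -1). *)
lemma tet_signed_vertices_distinct:
  fixes s t :: int
  assumes two: "(2::'f::field) \<noteq> 0" and a: "a \<in> {1..4}" and b: "b \<in> {1..4}"
    and s: "s = 1 \<or> s = -1" and t: "t = 1 \<or> t = -1"
    and eq: "\<And>j. (of_int s :: 'f) * tet a j = of_int t * tet b j"
  shows "a = b"
proof -
  have "(1::'f) \<noteq> -1" using two by (metis one_add_one add.right_inverse)
  then show ?thesis
    using one_to_four_cases[OF a] one_to_four_cases[OF b] s t eq[of I1] eq[of I2] eq[of I3]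
    by (elim disjE) (simp_all add: tet_def)
qed

(* The representation is faithful: p is recovered from the images of the vertices. *)
lemma tet_rep_inj:
  assumes two: "(2::'f::field) \<noteq> 0" and p: "p permutes {1..4}" and q: "q permutes {1..4}"
    and eq: "tet_rep p = (tet_rep q :: idx3 \<Rightarrow> idx3 \<Rightarrow> 'f)"
  shows "p = q"
proof
  fix b show "p b = q b"
  proof (cases "b \<in> {1..4}")
    case True
    have "(of_int (sign p) :: 'f) * tet (p b) j = of_int (sign q) * tet (q b) j" for j
      using tet_rep_apply[OF two p True, of j] tet_rep_apply[OF two q True, of j] eq by simp
    moreover have "sign r = 1 \<or> sign r = -1" for r :: "nat \<Rightarrow> nat" by (simp add: sign_def)
    ultimately show ?thesis
      using tet_signed_vertices_distinct[OF two] True p q by (metis permutes_in_image)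
  next
    case False
    then show ?thesis using permutes_not_in[OF p] permutes_not_in[OF q] by simp
  qed
qed

definition diag_conj :: "(idx3 \<Rightarrow> 'a::comm_ring_1) \<Rightarrow> (idx3 \<Rightarrow> 'a) \<Rightarrow> (idx3 \<Rightarrow> idx3 \<Rightarrow> 'a) \<Rightarrow> idx3 \<Rightarrow> idx3 \<Rightarrow> 'a" where
  "diag_conj \<alpha> \<beta> A j k = \<alpha> j * A j k * \<beta> k"

lemma diag_conj_mult:
  assumes inv: "\<And>j. \<beta> j * \<alpha> j = 1"
  shows "mat_mult (diag_conj \<alpha> \<beta> A) (diag_conj \<alpha> \<beta> B) = diag_conj \<alpha> \<beta> (mat_mult A B)"
proof (intro ext)
  fix j k
  have "mat_mult (diag_conj \<alpha> \<beta> A) (diag_conj \<alpha> \<beta> B) j k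
      = \<alpha> j * (A j I1 * (\<beta> I1 * \<alpha> I1) * B I1 k + A j I2 * (\<beta> I2 * \<alpha> I2) * B I2 k
                + A j I3 * (\<beta> I3 * \<alpha> I3) * B I3 k) * \<beta> k"
    by (simp add: mat_mult_def diag_conj_def algebra_simps)
  then show "mat_mult (diag_conj \<alpha> \<beta> A) (diag_conj \<alpha> \<beta> B) j k = diag_conj \<alpha> \<beta> (mat_mult A B) j k"
    by (simp add: inv mat_mult_def diag_conj_def)
qed

lemma diag_conj_inj:
  assumes inv: "\<And>j. \<beta> j * \<alpha> j = 1" and eq: "diag_conj \<alpha> \<beta> A = diag_conj \<alpha> \<beta> B"
  shows "A = B"
proof (intro ext)
  fix j k
  have "\<beta> j * diag_conj \<alpha> \<beta> A' j k * \<alpha> k = (\<beta> j * \<alpha> j) * A' j k * (\<beta> k * \<alpha> k)" for A'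
    by (simp add: diag_conj_def mult_ac)
  then have "A' j k = \<beta> j * diag_conj \<alpha> \<beta> A' j k * \<alpha> k" for A'
    by (simp add: inv)
  then show "A j k = B j k" using eq by metis
qed

(* The coordinates of v_j with respect to w_j: v_1 = c w_1, v_2 = c w_2, v_3 = w_3. *)
definition vscale :: "'a::comm_ring_1 \<Rightarrow> idx3 \<Rightarrow> 'a" where
  "vscale c j = (if j = I3 then 1 else c)"

lemma vscale_inverse: "i * i = -1 \<Longrightarrow> vscale (- i) j * vscale i j = (1::'a::comm_ring_1)"
  by (simp add: vscale_def)

lemma sqrt_m1_sandwich: "i * i = -1 \<Longrightarrow> i * x * i = - (x::'a::comm_ring_1)"
  by (metis mult.commute mult.left_commute mult_minus1_right mult.right_neutral)

(* The matrix of tet_rep p, read in the basis v, expressed in the coordinates of the basis w. *)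
definition vmat :: "'f::field \<Rightarrow> (nat \<Rightarrow> nat) \<Rightarrow> idx3 \<Rightarrow> idx3 \<Rightarrow> 'f" where
  "vmat i p = diag_conj (vscale i) (vscale (- i)) (tet_rep p)"

lemma vmat_mult:
  assumes "(2::'f::field) \<noteq> 0" "i * i = (-1::'f)" "p permutes {1..4}" "q permutes {1..4}"
  shows "vmat i (p \<circ> q) = mat_mult (vmat i p) (vmat i q)"
proof -
  have "(tet_rep (p \<circ> q) :: idx3 \<Rightarrow> idx3 \<Rightarrow> 'f) = mat_mult (tet_rep p) (tet_rep q)"
    by (intro ext) (rule tet_rep_mult[OF assms(1,3,4), symmetric])
  then show ?thesis unfolding vmat_def by (simp add: diag_conj_mult vscale_inverse assms(2))
qed

lemma vmat_id:
  assumes "(2::'f::field) \<noteq> 0" "i * i = (-1::'f)"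
  shows "vmat i id j k = (if j = k then 1 else 0)"
  using vscale_inverse[OF assms(2)] by (simp add: vmat_def diag_conj_def tet_rep_id[OF assms(1)] mult.commute)

lemma vmat_inj:
  assumes "(2::'f::field) \<noteq> 0" "i * i = (-1::'f)" "p permutes {1..4}" "q permutes {1..4}"
    and "vmat i p = vmat i q"
  shows "p = q"
  using assms by (metis vmat_def diag_conj_inj vscale_inverse tet_rep_inj)

lemma sum_jb: "(\<Sum>p\<in>(UNIV::jb set). f p)
    = f U + f (W I1) + f (W I2) + f (W I3) + f Xo + f (X I1) + f (X I2) + f (X I3)"
  by (simp add: UNIV_jb add.assoc)

lemma jck_eqI:
  assumes "a U = b U" "a (W I1) = b (W I1)" "a (W I2) = b (W I2)" "a (W I3) = b (W I3)"
    "a Xo = b Xo" "a (X I1) = b (X I1)" "a (X I2) = b (X I2)" "a (X I3) = b (X I3)"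
  shows "a = b"
proof
  fix c :: jb
  have "c \<in> {U, W I1, W I2, W I3, Xo, X I1, X I2, X I3}" by (simp add: UNIV_jb[symmetric])
  then show "a c = b c" using assms by auto
qed

definition jmat :: "(idx3 \<Rightarrow> idx3 \<Rightarrow> 'z::comm_ring_1) \<Rightarrow> 'z jck \<Rightarrow> 'z jck" where
 "jmat A a = (\<lambda>c. case c of U \<Rightarrow> a U | Xo \<Rightarrow> a Xo
    | W j \<Rightarrow> A j I1 * a (W I1) + A j I2 * a (W I2) + A j I3 * a (W I3)
    | X j \<Rightarrow> A j I1 * a (X I1) + A j I2 * a (X I2) + A j I3 * a (X I3))"

lemma jmat_add: "jmat A (jadd a b) = jadd (jmat A a) (jmat A b)"
  by (rule jck_eqI) (simp_all add: jmat_def jadd_def algebra_simps)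

lemma jmat_scal: "jmat A (jscal z a) = jscal z (jmat A a)"
  by (rule jck_eqI) (simp_all add: jmat_def jscal_def algebra_simps)

lemma jmat_Z_linear: "Z_linear (jmat A)"
  unfolding Z_linear_def by (simp add: jmat_add jmat_scal)

lemma jmat_even_map: "even_map (jmat A)"
  unfolding even_map_def J_even_def J_odd_def jspan_def
  by (auto simp: jmat_def split: jb.split intro: idx3.exhaust)

lemma jmat_comp: "jmat A (jmat B a) = jmat (mat_mult A B) a"
  by (rule jck_eqI) (simp_all add: jmat_def mat_mult_def algebra_simps)

lemma jmat_id: "jmat (\<lambda>j k. if j = k then 1 else 0) = id"
proof
  fix a :: "'z::comm_ring_1 jck"
  show "jmat (\<lambda>j k. if j = k then 1 else 0) a = id a"
    by (rule jck_eqI) (simp_all add: jmat_def)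
qed

lemma jmat_entry: "jmat A (sc (W k) 1) (W j) = A j k"
  by (cases j; cases k) (simp_all add: jmat_def sc_def)

lemma hom_mat_mult:
  assumes "\<And>a b. h (a + b) = h a + h b" "\<And>a b. h (a * b) = h a * h b"
  shows "(\<lambda>j k. h (mat_mult A B j k)) = mat_mult (\<lambda>j k. h (A j k)) (\<lambda>j k. h (B j k))"
  by (simp add: mat_mult_def fun_eq_iff assms)

(* The matrices vmat i (a b) of the six transpositions, with i replaced by an arbitrary c. *)
definition swap12 :: "'a::comm_ring_1 \<Rightarrow> idx3 \<Rightarrow> idx3 \<Rightarrow> 'a" where
  "swap12 c = (\<lambda>j k. case (j, k) of (I1, I2) \<Rightarrow> -1 | (I2, I1) \<Rightarrow> -1 | (I3, I3) \<Rightarrow> -1 | _ \<Rightarrow> 0)"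
definition swap13 :: "'a::comm_ring_1 \<Rightarrow> idx3 \<Rightarrow> idx3 \<Rightarrow> 'a" where
  "swap13 c = (\<lambda>j k. case (j, k) of (I1, I3) \<Rightarrow> - c | (I2, I2) \<Rightarrow> -1 | (I3, I1) \<Rightarrow> c | _ \<Rightarrow> 0)"
definition swap14 :: "'a::comm_ring_1 \<Rightarrow> idx3 \<Rightarrow> idx3 \<Rightarrow> 'a" where
  "swap14 c = (\<lambda>j k. case (j, k) of (I1, I1) \<Rightarrow> -1 | (I2, I3) \<Rightarrow> c | (I3, I2) \<Rightarrow> - c | _ \<Rightarrow> 0)"
definition swap23 :: "'a::comm_ring_1 \<Rightarrow> idx3 \<Rightarrow> idx3 \<Rightarrow> 'a" where
  "swap23 c = (\<lambda>j k. case (j, k) of (I1, I1) \<Rightarrow> -1 | (I2, I3) \<Rightarrow> - c | (I3, I2) \<Rightarrow> c | _ \<Rightarrow> 0)"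
definition swap24 :: "'a::comm_ring_1 \<Rightarrow> idx3 \<Rightarrow> idx3 \<Rightarrow> 'a" where
  "swap24 c = (\<lambda>j k. case (j, k) of (I1, I3) \<Rightarrow> c | (I2, I2) \<Rightarrow> -1 | (I3, I1) \<Rightarrow> - c | _ \<Rightarrow> 0)"
definition swap34 :: "'a::comm_ring_1 \<Rightarrow> idx3 \<Rightarrow> idx3 \<Rightarrow> 'a" where
  "swap34 c = (\<lambda>j k. case (j, k) of (I1, I2) \<Rightarrow> 1 | (I2, I1) \<Rightarrow> 1 | (I3, I3) \<Rightarrow> -1 | _ \<Rightarrow> 0)"

lemmas swap_mat_defs = swap12_def swap13_def swap14_def swap23_def swap24_def swap34_def

definition swap_mats :: "'a::comm_ring_1 \<Rightarrow> (idx3 \<Rightarrow> idx3 \<Rightarrow> 'a) set" where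
  "swap_mats c = {swap12 c, swap13 c, swap14 c, swap23 c, swap24 c, swap34 c}"

lemma vmat_transpositions:
  assumes "(2::'f::field) \<noteq> 0" "i * i = (-1::'f)"
  shows "vmat i (Transposition.transpose 1 2) = swap12 i"
    "vmat i (Transposition.transpose 1 3) = swap13 i"
    "vmat i (Transposition.transpose 1 4) = swap14 i"
    "vmat i (Transposition.transpose 2 3) = swap23 i"
    "vmat i (Transposition.transpose 2 4) = swap24 i"
    "vmat i (Transposition.transpose 3 4) = swap34 i"
  using four_nonzero[OF assms(1)] sqrt_m1_sandwich[OF assms(2)]
  unfolding vmat_def diag_conj_def tet_rep_def tet_frame_def sum_one_to_four
  by (simp_all add: fun_eq_iff all_idx3 sign_swap_id tet_def vscale_def swap_mat_defs transpose_def)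

lemma hom_swap_mats:
  fixes h :: "'a::comm_ring_1 \<Rightarrow> 'b::comm_ring_1"
  assumes "h 0 = 0" "h 1 = 1" "\<And>x. h (- x) = - h x"
  shows "(\<lambda>j k. h (swap12 c j k)) = swap12 (h c)" "(\<lambda>j k. h (swap13 c j k)) = swap13 (h c)"
    "(\<lambda>j k. h (swap14 c j k)) = swap14 (h c)" "(\<lambda>j k. h (swap23 c j k)) = swap23 (h c)"
    "(\<lambda>j k. h (swap24 c j k)) = swap24 (h c)" "(\<lambda>j k. h (swap34 c j k)) = swap34 (h c)"
  by (simp_all add: fun_eq_iff all_idx3 swap_mat_defs assms)

lemma jmat_swap_mult:
  fixes d :: "'z::comm_ring_1 \<Rightarrow> 'z"
  assumes d_add: "\<And>f g. d (f + g) = d f + d g"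
    and d_c: "\<And>f. d (c * f) = c * d f"
    and c_sq: "c * c = -1"
    and A: "A \<in> swap_mats c"
  shows "jmult d (jmat A a) (jmat A b) = jmat A (jmult d a b)"
proof -
  have d0: "d 0 = 0" using d_add[of 0 0] by simp
  have d_neg: "d (- f) = - d f" for f
    using d_add[of f "- f"] d0 by (simp add: eq_neg_iff_add_eq_0 add.commute)
  have c_sq': "c * (c * f) = - f" for f using c_sq by (metis mult.assoc mult_minus1)
  have "A = swap12 c \<or> A = swap13 c \<or> A = swap14 c \<or> A = swap23 c \<or> A = swap24 c \<or> A = swap34 c"
    using A by (simp add: swap_mats_def)
  then show ?thesis
    by (intro jck_eqI; elim disjE;
        simp add: jmult_def sum_jb sc_def jneg_def jzero_def jmat_def swap_mat_defs d_add d_c d0 d_neg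
          algebra_simps c_sq c_sq')
qed

lemma is_aut_id: "is_aut \<iota> d id"
  unfolding is_aut_def by simp

lemma is_aut_comp: "is_aut \<iota> d s \<Longrightarrow> is_aut \<iota> d t \<Longrightarrow> is_aut \<iota> d (s \<circ> t)"
  unfolding is_aut_def by (auto intro: bij_comp)

lemma dsum_jspan: "dsum (jspan S) (jspan T) \<subseteq> jspan (S \<union> T)"
  unfolding dsum_def jspan_def jadd_def by auto

lemma perm_decompositions:
  "perm_tau1 = Transposition.transpose 1 2 \<circ> Transposition.transpose 3 4"
  "perm_tau2 = Transposition.transpose 2 3 \<circ> Transposition.transpose 1 4"
  "perm_phi = Transposition.transpose 1 2 \<circ> Transposition.transpose 2 3"
  "perm_tau = Transposition.transpose 1 2"
  by (simp_all add: fun_eq_iff perm_tau1_def perm_tau2_def perm_phi_def perm_tau_def transpose_def)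

locale jck_sqrt_m1 =
  fixes \<iota> :: "'f::field \<Rightarrow> 'z::comm_ring_1" and d :: "'z \<Rightarrow> 'z" and i :: 'f
  assumes two: "(2::'f) \<noteq> 0"
    and iota_add: "\<And>a b. \<iota> (a + b) = \<iota> a + \<iota> b"
    and iota_mult: "\<And>a b. \<iota> (a * b) = \<iota> a * \<iota> b"
    and iota_one: "\<iota> 1 = 1"
    and d_add: "\<And>f g. d (f + g) = d f + d g"
    and d_scal: "\<And>c f. d (\<iota> c * f) = \<iota> c * d f"
    and sqrt_m1: "i * i = -1"
begin

lemma iota_zero: "\<iota> 0 = 0"
  using iota_add[of 0 0] by simp

lemma iota_neg: "\<iota> (- x) = - \<iota> x"
  using iota_add[of x "- x"] iota_zero by (simp add: eq_neg_iff_add_eq_0 add.commute)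

lemma iota_inj: "\<iota> x = \<iota> y \<Longrightarrow> x = y"
proof (rule ccontr)
  assume eq: "\<iota> x = \<iota> y" and ne: "x \<noteq> y"
  have "\<iota> (x - y) = 0" using eq iota_add[of "x - y" y] by simp
  then have "\<iota> ((x - y) * inverse (x - y)) = 0" by (simp add: iota_mult)
  then show False using ne iota_one by simp
qed

lemma iota_sqrt_m1: "\<iota> i * \<iota> i = -1"
  by (metis iota_mult sqrt_m1 iota_neg iota_one)

definition rho :: "(nat \<Rightarrow> nat) \<Rightarrow> 'z jck \<Rightarrow> 'z jck" where
  "rho p = jmat (\<lambda>j k. \<iota> (vmat i p j k))"

lemma rho_comp:
  assumes "p permutes {1..4}" "q permutes {1..4}"
  shows "rho (p \<circ> q) = rho p \<circ> rho q"
  by (simp add: fun_eq_iff rho_def jmat_comp vmat_mult[OF two sqrt_m1 assms]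
      hom_mat_mult[of \<iota>, OF iota_add iota_mult])

lemma rho_id: "rho id = id"
proof -
  have "(\<lambda>j k. \<iota> (vmat i id j k)) = (\<lambda>j k. if j = k then 1 else 0)"
    by (simp add: fun_eq_iff vmat_id[OF two sqrt_m1] iota_zero iota_one)
  then show ?thesis by (simp add: rho_def jmat_id)
qed

lemma rho_transpositions:
  "rho (Transposition.transpose 1 2) = jmat (swap12 (\<iota> i))"
  "rho (Transposition.transpose 1 3) = jmat (swap13 (\<iota> i))"
  "rho (Transposition.transpose 1 4) = jmat (swap14 (\<iota> i))"
  "rho (Transposition.transpose 2 3) = jmat (swap23 (\<iota> i))"
  "rho (Transposition.transpose 2 4) = jmat (swap24 (\<iota> i))"
  "rho (Transposition.transpose 3 4) = jmat (swap34 (\<iota> i))"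
  unfolding rho_def vmat_transpositions[OF two sqrt_m1] hom_swap_mats[of \<iota>, OF iota_zero iota_one iota_neg]
  by (rule refl)+

lemma rho_transposition:
  assumes a: "a \<in> {1..4}" and b: "b \<in> {1..4}" and ab: "a \<noteq> b"
  obtains A where "A \<in> swap_mats (\<iota> i)" "rho (Transposition.transpose a b) = jmat A"
proof -
  have "\<exists>A \<in> swap_mats (\<iota> i). rho (Transposition.transpose a b) = jmat A"
    using one_to_four_cases[OF a] one_to_four_cases[OF b] ab
    unfolding swap_mats_def
    by (elim disjE; simp only: rho_transpositions transpose_commute[of 2 1] transpose_commute[of 3 1]
        transpose_commute[of 4 1] transpose_commute[of 3 2] transpose_commute[of 4 2]
        transpose_commute[of 4 3]; blast)
  then show ?thesis using that by blast
qed

(* Transpositions act by automorphisms: involutions, hence bijective, and multiplicative. *)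
lemma aut_transposition:
  assumes a: "a \<in> {1..4}" and b: "b \<in> {1..4}" and ab: "a \<noteq> b"
  shows "is_aut \<iota> d (rho (Transposition.transpose a b))"
proof -
  obtain A where A: "A \<in> swap_mats (\<iota> i)" and rho_eq: "rho (Transposition.transpose a b) = jmat A"
    using rho_transposition[OF a b ab] .
  have t: "Transposition.transpose a b permutes {1..4}" by (rule permutes_swap_id[OF a b])
  have "rho (Transposition.transpose a b) \<circ> rho (Transposition.transpose a b) = id"
    using rho_comp[OF t t] rho_id by simp
  then have "bij (rho (Transposition.transpose a b))" using o_bij by blast
  then show ?thesis
    unfolding is_aut_def rho_eq
    by (simp add: jmat_add jmat_scal jmat_swap_mult[OF d_add d_scal iota_sqrt_m1 A])
qed

(* Since transpositions generate S_4, every permutation acts by an automorphism. *)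
lemma aut_rho:
  assumes "p permutes {1..4}"
  shows "is_aut \<iota> d (rho p)"
  using assms finite_atLeastAtMost[of "1::nat" 4]
proof (induction rule: permutes_induct)
  case id
  then show ?case using rho_id is_aut_id by (simp add: id_def)
next
  case (swap a b p)
  have "rho (Transposition.transpose a b \<circ> p) = rho (Transposition.transpose a b) \<circ> rho p"
    by (rule rho_comp[OF permutes_swap_id[OF swap.hyps(1,2)] \<open>p permutes {1..4}\<close>])
  then show ?case
    using is_aut_comp[OF aut_transposition[OF swap.hyps(1-3)] swap.IH] by (simp only:)
qed

lemma rho_inj:
  assumes p: "p permutes {1..4}" and q: "q permutes {1..4}" and eq: "rho p = rho q"
  shows "p = q"
proof -
  have "vmat i p j k = vmat i q j k" for j k
    using arg_cong[OF eq, of "\<lambda>s. s (sc (W k) 1) (W j)"] by (simp add: rho_def jmat_entry iota_inj)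
  then show ?thesis by (intro vmat_inj[OF two sqrt_m1 p q]) (simp add: fun_eq_iff)
qed

lemma rho_named_perms:
  "rho perm_tau1 = jmat (swap12 (\<iota> i)) \<circ> jmat (swap34 (\<iota> i))"
  "rho perm_tau2 = jmat (swap23 (\<iota> i)) \<circ> jmat (swap14 (\<iota> i))"
  "rho perm_phi = jmat (swap12 (\<iota> i)) \<circ> jmat (swap23 (\<iota> i))"
  "rho perm_tau = jmat (swap12 (\<iota> i))"
  by (simp_all add: perm_decompositions rho_comp permutes_swap_id rho_transpositions del: One_nat_def)

lemma tau1_on_J00_J11: "a \<in> dsum J00 J11 \<Longrightarrow> rho perm_tau1 a = a"
  using dsum_jspan[of "{U, Xo}" "{W I3, X I3}"] unfolding J00_def J11_def
  by (intro jck_eqI) (auto simp: jspan_def rho_named_perms jmat_def swap_mat_defs)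

lemma tau1_on_J10_J01: "a \<in> dsum J10 J01 \<Longrightarrow> rho perm_tau1 a = jneg a"
  using dsum_jspan[of "{W I1, X I1}" "{W I2, X I2}"] unfolding J10_def J01_def
  by (intro jck_eqI) (auto simp: jspan_def rho_named_perms jmat_def swap_mat_defs jneg_def)

lemma tau2_on_J00_J10: "a \<in> dsum J00 J10 \<Longrightarrow> rho perm_tau2 a = a"
  using dsum_jspan[of "{U, Xo}" "{W I1, X I1}"] unfolding J00_def J10_def
  by (intro jck_eqI) (auto simp: jspan_def rho_named_perms jmat_def swap_mat_defs
      mult.assoc[symmetric] iota_sqrt_m1)

lemma tau2_on_J01_J11: "a \<in> dsum J01 J11 \<Longrightarrow> rho perm_tau2 a = jneg a"
  using dsum_jspan[of "{W I2, X I2}" "{W I3, X I3}"] unfolding J01_def J11_def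
  by (intro jck_eqI) (auto simp: jspan_def rho_named_perms jmat_def swap_mat_defs jneg_def
      mult.assoc[symmetric] iota_sqrt_m1)

lemma phi_on_basis:
  "rho perm_phi jone = jone" "rho perm_phi yy0 = yy0"
  "rho perm_phi (vv \<iota> i I1) = vv \<iota> i I2" "rho perm_phi (vv \<iota> i I2) = vv \<iota> i I3"
  "rho perm_phi (vv \<iota> i I3) = vv \<iota> i I1" "rho perm_phi (yy \<iota> i I1) = yy \<iota> i I2"
  "rho perm_phi (yy \<iota> i I2) = yy \<iota> i I3" "rho perm_phi (yy \<iota> i I3) = yy \<iota> i I1"
  by (rule jck_eqI; simp add: rho_named_perms jmat_def swap_mat_defs jone_def yy0_def vv_def yy_def
      sc_def iota_sqrt_m1)+

lemma tau_on_basis: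
  "rho perm_tau jone = jone" "rho perm_tau yy0 = yy0"
  "rho perm_tau (vv \<iota> i I1) = jneg (vv \<iota> i I2)" "rho perm_tau (vv \<iota> i I2) = jneg (vv \<iota> i I1)"
  "rho perm_tau (vv \<iota> i I3) = jneg (vv \<iota> i I3)" "rho perm_tau (yy \<iota> i I1) = jneg (yy \<iota> i I2)"
  "rho perm_tau (yy \<iota> i I2) = jneg (yy \<iota> i I1)" "rho perm_tau (yy \<iota> i I3) = jneg (yy \<iota> i I3)"
  by (rule jck_eqI; simp add: rho_named_perms jmat_def swap_mat_defs jone_def yy0_def vv_def yy_def
      sc_def jneg_def)+

end

theorem theorem5p1:
  fixes \<iota> :: "'f::field \<Rightarrow> 'z::comm_ring_1"
    and d :: "'z \<Rightarrow> 'z"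
    and i :: 'f
  assumes char_ne_2: "(2::'f) \<noteq> 0"
    and iota_add: "\<And>a b. \<iota> (a + b) = \<iota> a + \<iota> b"
    and iota_mult: "\<And>a b. \<iota> (a * b) = \<iota> a * \<iota> b"
    and iota_one: "\<iota> 1 = 1"
    and d_add: "\<And>f g. d (f + g) = d f + d g"
    and d_scal: "\<And>c f. d (\<iota> c * f) = \<iota> c * d f"
    and d_leibniz: "\<And>f g. d (f * g) = f * d g + d f * g"
    and ZdZ: "\<And>z. \<exists>n (c :: nat \<Rightarrow> 'f) f g. z = (\<Sum>k<n. \<iota> (c k) * (f k * d (g k)))"
    and sqrt_m1: "i * i = - 1"
  shows "\<exists>\<rho>. \<rho> \<in> hom (sym_group 4) (aut_group \<iota> d)
      \<and> inj_on \<rho> (carrier (sym_group 4))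
      \<and> (\<forall>p \<in> carrier (sym_group 4). even_map (\<rho> p) \<and> Z_linear (\<rho> p))
      \<and> (\<forall>a \<in> dsum J00 J11. \<rho> perm_tau1 a = a)
      \<and> (\<forall>a \<in> dsum J10 J01. \<rho> perm_tau1 a = jneg a)
      \<and> (\<forall>a \<in> dsum J00 J10. \<rho> perm_tau2 a = a)
      \<and> (\<forall>a \<in> dsum J01 J11. \<rho> perm_tau2 a = jneg a)
      \<and> \<rho> perm_phi jone = jone \<and> \<rho> perm_phi yy0 = yy0
      \<and> (\<forall>k. \<rho> perm_phi (vv \<iota> i k) = vv \<iota> i (nxt k))
      \<and> (\<forall>k. \<rho> perm_phi (yy \<iota> i k) = yy \<iota> i (nxt k))
      \<and> \<rho> perm_tau jone = jone \<and> \<rho> perm_tau yy0 = yy0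
      \<and> \<rho> perm_tau (vv \<iota> i I1) = jneg (vv \<iota> i I2)
      \<and> \<rho> perm_tau (vv \<iota> i I2) = jneg (vv \<iota> i I1)
      \<and> \<rho> perm_tau (vv \<iota> i I3) = jneg (vv \<iota> i I3)
      \<and> \<rho> perm_tau (yy \<iota> i I1) = jneg (yy \<iota> i I2)
      \<and> \<rho> perm_tau (yy \<iota> i I2) = jneg (yy \<iota> i I1)
      \<and> \<rho> perm_tau (yy \<iota> i I3) = jneg (yy \<iota> i I3)"
proof -
  interpret jck_sqrt_m1 \<iota> d i
    using char_ne_2 iota_add iota_mult iota_one d_add d_scal sqrt_m1 by unfold_locales
  have hom: "rho \<in> hom (sym_group 4) (aut_group \<iota> d)"
    by (auto simp: hom_def sym_group_carrier sym_group_mult aut_group_def aut_rho rho_comp)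
  have inj: "inj_on rho (carrier (sym_group 4))"
    by (auto simp: inj_on_def sym_group_carrier intro: rho_inj)
  have even_linear: "even_map (rho p) \<and> Z_linear (rho p)" for p
    by (simp add: rho_def jmat_even_map jmat_Z_linear)
  have phi_cycles: "\<forall>k. rho perm_phi (vv \<iota> i k) = vv \<iota> i (nxt k)"
    "\<forall>k. rho perm_phi (yy \<iota> i k) = yy \<iota> i (nxt k)"
    using phi_on_basis by (simp_all add: all_idx3)
  show ?thesis
    by (rule exI[of _ rho], use hom inj even_linear phi_cycles phi_on_basis tau_on_basis
        tau1_on_J00_J11 tau1_on_J10_J01 tau2_on_J00_J10 tau2_on_J01_J11 in blast)
qed

end
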